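(* Let $G$ be a $6$-regular graph, $\mathcal S$ a canonical path partition of $G$, and $P$ a path component of $\mathcal S$. Let $x_1,x_2\in V_2$ be path neighbors on $P$. If $x_1$ goes to a vertex $o$ that is an end-vertex of a path component $P'\neq P$, then $o$ is the only vertex that $x_2$ goes to.
   Context: All graphs are finite, simple and undirected. A path partition of $G=(V,E)$ is a set of vertex-disjoint paths (single vertices allowed) covering $V$; its members are components. A component with $t\ge3$ vertices is a cycle component if the subgraph induced on its vertex set has a spanning cycle; a one-vertex component is an isolated vertex; every other component is a path component. A path partition is canonical if (1) it has the minimum number of components among all path partitions of $G$; (2) among those, it has the maximum number of cycle components; (3) it has no isolated vertices. Given a canonical path partition $\mathcal S$ of $G$: two vertices are path neighbors if they are consecutive on a path component. An edge of $G$ is a free edge unless it joins two path neighbors or has both endpoints in the same cycle component. $V_1$ is the set of end-vertices of path components together with all vertices of cycle components. $V_2$ is the set of vertices not in $V_1$ that are joined by a free edge to a vertex of $V_1$. A balanced edge is a free edge with one endpoint in $V_1$ and the other in $V_2$; for $x\in V_2$, $y\in V_1$ we say $x$ goes to $y$ if $xy$ is a balanced edge. *)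

theory Defs
  imports Main
begin

definition simple_graph :: "'a set \<Rightarrow> ('a \<Rightarrow> 'a \<Rightarrow> bool) \<Rightarrow> bool" where
  "simple_graph V E \<longleftrightarrow> finite V \<and>
     (\<forall>u v. E u v \<longrightarrow> u \<in> V \<and> v \<in> V \<and> u \<noteq> v \<and> E v u)"

definition regular :: "'a set \<Rightarrow> ('a \<Rightarrow> 'a \<Rightarrow> bool) \<Rightarrow> nat \<Rightarrow> bool" where
  "regular V E k \<longleftrightarrow> (\<forall>v\<in>V. card {u. E v u} = k)"

definition is_path :: "('a \<Rightarrow> 'a \<Rightarrow> bool) \<Rightarrow> 'a list \<Rightarrow> bool" where
  "is_path E p \<longleftrightarrow> p \<noteq> [] \<and> distinct p \<and> (\<forall>i. Suc i < length p \<longrightarrow> E (p ! i) (p ! Suc i))"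

definition path_partition :: "'a set \<Rightarrow> ('a \<Rightarrow> 'a \<Rightarrow> bool) \<Rightarrow> 'a list set \<Rightarrow> bool" where
  "path_partition V E S \<longleftrightarrow>
     (\<forall>p\<in>S. is_path E p \<and> set p \<subseteq> V) \<and>
     (\<forall>p\<in>S. \<forall>q\<in>S. p \<noteq> q \<longrightarrow> set p \<inter> set q = {}) \<and>
     (\<Union>p\<in>S. set p) = V"

definition cycle_comp :: "('a \<Rightarrow> 'a \<Rightarrow> bool) \<Rightarrow> 'a list \<Rightarrow> bool" where
  "cycle_comp E p \<longleftrightarrow> length p \<ge> 3 \<and>
     (\<exists>c. distinct c \<and> set c = set p \<and>
          (\<forall>i. Suc i < length c \<longrightarrow> E (c ! i) (c ! Suc i)) \<and> E (last c) (hd c))"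

definition isolated_comp :: "'a list \<Rightarrow> bool" where
  "isolated_comp p \<longleftrightarrow> length p = 1"

definition path_comp :: "('a \<Rightarrow> 'a \<Rightarrow> bool) \<Rightarrow> 'a list \<Rightarrow> bool" where
  "path_comp E p \<longleftrightarrow> \<not> cycle_comp E p \<and> \<not> isolated_comp p"

definition num_cycles :: "('a \<Rightarrow> 'a \<Rightarrow> bool) \<Rightarrow> 'a list set \<Rightarrow> nat" where
  "num_cycles E S = card {p\<in>S. cycle_comp E p}"

definition canonical :: "'a set \<Rightarrow> ('a \<Rightarrow> 'a \<Rightarrow> bool) \<Rightarrow> 'a list set \<Rightarrow> bool" where
  "canonical V E S \<longleftrightarrow> path_partition V E S \<and>
     (\<forall>S'. path_partition V E S' \<longrightarrow> card S \<le> card S') \<and>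
     (\<forall>S'. path_partition V E S' \<and> card S' = card S \<longrightarrow> num_cycles E S' \<le> num_cycles E S) \<and>
     (\<forall>p\<in>S. \<not> isolated_comp p)"

definition consecutive_on :: "'a list \<Rightarrow> 'a \<Rightarrow> 'a \<Rightarrow> bool" where
  "consecutive_on p u v \<longleftrightarrow>
     (\<exists>i. Suc i < length p \<and> ((p ! i = u \<and> p ! Suc i = v) \<or> (p ! i = v \<and> p ! Suc i = u)))"

definition path_nbrs :: "('a \<Rightarrow> 'a \<Rightarrow> bool) \<Rightarrow> 'a list set \<Rightarrow> 'a \<Rightarrow> 'a \<Rightarrow> bool" where
  "path_nbrs E S u v \<longleftrightarrow> (\<exists>p\<in>S. path_comp E p \<and> consecutive_on p u v)"

definition same_cycle :: "('a \<Rightarrow> 'a \<Rightarrow> bool) \<Rightarrow> 'a list set \<Rightarrow> 'a \<Rightarrow> 'a \<Rightarrow> bool" where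
  "same_cycle E S u v \<longleftrightarrow> (\<exists>p\<in>S. cycle_comp E p \<and> u \<in> set p \<and> v \<in> set p)"

definition free_edge :: "('a \<Rightarrow> 'a \<Rightarrow> bool) \<Rightarrow> 'a list set \<Rightarrow> 'a \<Rightarrow> 'a \<Rightarrow> bool" where
  "free_edge E S u v \<longleftrightarrow> E u v \<and> \<not> path_nbrs E S u v \<and> \<not> same_cycle E S u v"

definition V1 :: "('a \<Rightarrow> 'a \<Rightarrow> bool) \<Rightarrow> 'a list set \<Rightarrow> 'a set" where
  "V1 E S = {v. \<exists>p\<in>S. path_comp E p \<and> (v = hd p \<or> v = last p)}
           \<union> {v. \<exists>p\<in>S. cycle_comp E p \<and> v \<in> set p}"

definition V2 :: "'a set \<Rightarrow> ('a \<Rightarrow> 'a \<Rightarrow> bool) \<Rightarrow> 'a list set \<Rightarrow> 'a set" where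
  "V2 V E S = {v\<in>V. v \<notin> V1 E S \<and> (\<exists>y\<in>V1 E S. free_edge E S v y)}"

definition balanced_edge :: "'a set \<Rightarrow> ('a \<Rightarrow> 'a \<Rightarrow> bool) \<Rightarrow> 'a list set \<Rightarrow> 'a \<Rightarrow> 'a \<Rightarrow> bool" where
  "balanced_edge V E S u v \<longleftrightarrow> free_edge E S u v \<and>
     ((u \<in> V1 E S \<and> v \<in> V2 V E S) \<or> (u \<in> V2 V E S \<and> v \<in> V1 E S))"

definition goes_to :: "'a set \<Rightarrow> ('a \<Rightarrow> 'a \<Rightarrow> bool) \<Rightarrow> 'a list set \<Rightarrow> 'a \<Rightarrow> 'a \<Rightarrow> bool" where
  "goes_to V E S x y \<longleftrightarrow> x \<in> V2 V E S \<and> y \<in> V1 E S \<and> balanced_edge V E S x y"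

end

theory Submission
  imports Defs
begin

text \<open>
  Write \<open>P = A x\<^sub>1 x\<^sub>2 B\<close> and let \<open>Q\<close> be \<open>P'\<close> traversed from \<open>z\<close>, so that
  \<open>A x\<^sub>1 Q\<close> is a path. A balanced edge from \<open>x\<^sub>2\<close> to some \<open>y \<noteq> z\<close> would let us
  attach \<open>x\<^sub>2 B\<close> at \<open>y\<close>: if \<open>y\<close> is the far end of \<open>P'\<close> or the end of \<open>A\<close>, one
  path covers \<open>P \<union> P'\<close>; if \<open>y\<close> lies in a third component, two paths cover three
  components; if \<open>y\<close> is the end of \<open>B\<close>, then \<open>x\<^sub>2 B\<close> closes into a new cycle
  while the number of components stays the same. Each case contradicts canonicity.
\<close>

lemma is_path_iff_successively:
  "is_path E p \<longleftrightarrow> p \<noteq> [] \<and> distinct p \<and> successively E p"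
  unfolding is_path_def successively_conv_nth by blast

lemma is_path_rev: "simple_graph V E \<Longrightarrow> is_path E p \<Longrightarrow> is_path E (rev p)"
  unfolding is_path_iff_successively simple_graph_def by (auto elim: successively_mono)

lemma is_path_append:
  "\<lbrakk>is_path E xs; is_path E ys; E (last xs) (hd ys); set xs \<inter> set ys = {}\<rbrakk>
   \<Longrightarrow> is_path E (xs @ ys)"
  unfolding is_path_iff_successively by (auto simp: successively_append_iff)

lemma is_path_appendD:
  "is_path E (xs @ ys) \<Longrightarrow> xs \<noteq> [] \<Longrightarrow> is_path E xs"
  "is_path E (xs @ ys) \<Longrightarrow> ys \<noteq> [] \<Longrightarrow> is_path E ys"
  unfolding is_path_iff_successively by (auto simp: successively_append_iff)

lemma cycle_comp_rotate_path:
  assumes "cycle_comp E p" "y \<in> set p"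
  shows "\<exists>q. is_path E q \<and> set q = set p \<and> hd q = y"
proof -
  obtain c where c: "distinct c" "set c = set p" "successively E c" "E (last c) (hd c)"
    using assms(1) unfolding cycle_comp_def successively_conv_nth by blast
  obtain c1 c2 where c_split: "c = c1 @ y # c2"
    using assms(2) c(2) by (metis split_list)
  show ?thesis
  proof (cases "c1 = []")
    case True
    then show ?thesis using c c_split by (auto simp: is_path_iff_successively)
  next
    case False
    have "successively E c1" "successively E (y # c2)"
      using c(3) unfolding c_split successively_append_iff by simp_all
    moreover have "E (last (y # c2)) (hd c1)"
      using c(4) False unfolding c_split by simp
    ultimately have "successively E ((y # c2) @ c1)"
      by (subst successively_append_iff) simp
    moreover have "distinct (y # c2 @ c1)" "set (y # c2 @ c1) = set p"
      using c(1,2) c_split by auto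
    ultimately show ?thesis by (intro exI[of _ "y # c2 @ c1"]) (simp add: is_path_iff_successively)
  qed
qed

lemma consecutive_on_commute: "consecutive_on p u v \<longleftrightarrow> consecutive_on p v u"
  unfolding consecutive_on_def by blast

lemma consecutive_on_append: "consecutive_on (xs @ [u, v] @ ys) u v"
  unfolding consecutive_on_def by (intro exI[of _ "length xs"]) (simp add: nth_append)

lemma consecutive_on_split:
  assumes "consecutive_on p u v"
  obtains xs ys where "p = xs @ [u, v] @ ys \<or> p = xs @ [v, u] @ ys"
proof -
  obtain i where i: "Suc i < length p" "(p ! i = u \<and> p ! Suc i = v) \<or> (p ! i = v \<and> p ! Suc i = u)"
    using assms unfolding consecutive_on_def by blast
  have "p = take i p @ [p ! i, p ! Suc i] @ drop (Suc (Suc i)) p"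
    using i(1) by (simp add: Cons_nth_drop_Suc)
  with i(2) show ?thesis using that[of "take i p" "drop (Suc (Suc i)) p"] by auto
qed

lemma consecutive_on_split_oriented:
  assumes "consecutive_on p u v"
  obtains xs ys where "xs @ [u, v] @ ys \<in> {p, rev p}"
proof -
  obtain xs ys where "p = xs @ [u, v] @ ys \<or> p = xs @ [v, u] @ ys"
    using assms by (rule consecutive_on_split)
  then show ?thesis
  proof
    assume "p = xs @ [u, v] @ ys"
    then show ?thesis
      using that[of xs ys] by simp
  next
    assume "p = xs @ [v, u] @ ys"
    then show ?thesis
      using that[of "rev ys" "rev xs"] by simp
  qed
qed

lemma consecutive_on_rev: "consecutive_on (rev p) u v \<longleftrightarrow> consecutive_on p u v"
proof -
  have "consecutive_on (rev p) u v" if uv: "consecutive_on p u v" for p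
  proof -
    obtain xs ys where "p = xs @ [u, v] @ ys \<or> p = xs @ [v, u] @ ys"
      using uv by (rule consecutive_on_split)
    then have "rev p = rev ys @ [v, u] @ rev xs \<or> rev p = rev ys @ [u, v] @ rev xs"
      by auto
    then show ?thesis using consecutive_on_append consecutive_on_commute by metis
  qed
  then show ?thesis by (metis rev_rev_ident)
qed

lemma path_partition_is_path: "path_partition V E S \<Longrightarrow> p \<in> S \<Longrightarrow> is_path E p"
  unfolding path_partition_def by simp

lemma path_partition_disjoint:
  "path_partition V E S \<Longrightarrow> p \<in> S \<Longrightarrow> q \<in> S \<Longrightarrow> p \<noteq> q \<Longrightarrow> set p \<inter> set q = {}"
  unfolding path_partition_def by simp

lemma finite_path_partition: "simple_graph V E \<Longrightarrow> path_partition V E S \<Longrightarrow> finite S"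
  by (rule finite_subset[OF _ finite_subset_distinct[of V]])
     (auto simp: simple_graph_def path_partition_def is_path_def)

lemma path_partition_exchange:
  assumes S: "path_partition V E S" and "R \<subseteq> S"
    and T_paths: "\<forall>q\<in>T. is_path E q"
    and T_disjoint: "pairwise (\<lambda>p q. set p \<inter> set q = {}) T"
    and T_covers: "(\<Union>q\<in>T. set q) = (\<Union>p\<in>R. set p)"
  shows "path_partition V E (S - R \<union> T)" "(S - R) \<inter> T = {}"
proof -
  note S_disjoint = path_partition_disjoint[OF S]
  have T_nonempty: "set q \<noteq> {}" if "q \<in> T" for q
    using T_paths that unfolding is_path_def by auto
  have cross: "set p \<inter> set q = {}" if "p \<in> S - R" "q \<in> T" for p q
    using that T_covers S_disjoint \<open>R \<subseteq> S\<close> by blast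
  show "(S - R) \<inter> T = {}"
    using cross[of q q for q] T_nonempty by auto
  have "(\<Union>p\<in>S - R \<union> T. set p) = (\<Union>p\<in>S - R. set p) \<union> (\<Union>p\<in>R. set p)"
    using T_covers by blast
  also have "\<dots> = V"
    using S \<open>R \<subseteq> S\<close> unfolding path_partition_def by blast
  finally have covers: "(\<Union>p\<in>S - R \<union> T. set p) = V" .
  have disjoint: "set p \<inter> set q = {}" if pq: "p \<in> S - R \<union> T" "q \<in> S - R \<union> T" "p \<noteq> q" for p q
  proof -
    consider "p \<in> S - R" "q \<in> S - R" | "p \<in> S - R" "q \<in> T" | "p \<in> T" "q \<in> S - R" | "p \<in> T" "q \<in> T"
      using pq(1,2) by blast
    then show ?thesis
    proof cases
      case 1
      then show ?thesis using S_disjoint \<open>p \<noteq> q\<close> by blast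
    next
      case 2
      then show ?thesis by (rule cross)
    next
      case 3
      then show ?thesis using cross[of q p] by (simp add: Int_commute)
    next
      case 4
      then show ?thesis using T_disjoint \<open>p \<noteq> q\<close> unfolding pairwise_def by blast
    qed
  qed
  have paths: "\<forall>p\<in>S - R \<union> T. is_path E p \<and> set p \<subseteq> V"
  proof
    fix p
    assume p: "p \<in> S - R \<union> T"
    then have "is_path E p"
      using path_partition_is_path[OF S] T_paths by auto
    moreover have "set p \<subseteq> V"
      by (subst covers[symmetric]) (rule UN_upper[OF p])
    ultimately show "is_path E p \<and> set p \<subseteq> V" ..
  qed
  have "\<forall>p\<in>S - R \<union> T. \<forall>q\<in>S - R \<union> T. p \<noteq> q \<longrightarrow> set p \<inter> set q = {}"
    using disjoint by blast
  with paths covers show "path_partition V E (S - R \<union> T)"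
    unfolding path_partition_def by (intro conjI)
qed

lemma card_Diff_Un_disjoint:
  assumes "finite S" "finite T" "R \<subseteq> S" "(S - R) \<inter> T = {}"
  shows "card (S - R \<union> T) + card R = card S + card T"
  using assms card_Un_disjoint[of "S - R" T] card_Diff_subset[of R S] card_mono[of S R]
  by (simp add: finite_subset)

lemma canonical_exchange_card:
  assumes "simple_graph V E" "canonical V E S" "R \<subseteq> S" "finite T"
    and "\<forall>q\<in>T. is_path E q" "pairwise (\<lambda>p q. set p \<inter> set q = {}) T"
    and "(\<Union>q\<in>T. set q) = (\<Union>p\<in>R. set p)"
  shows "card R \<le> card T"
proof -
  have S: "path_partition V E S"
    using assms(2) unfolding canonical_def by blast
  note S' = path_partition_exchange[OF S assms(3,5-7)]
  have "card S \<le> card (S - R \<union> T)"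
    using assms(2) S'(1) unfolding canonical_def by blast
  moreover have "card (S - R \<union> T) + card R = card S + card T"
    using finite_path_partition[OF assms(1) S] assms(3,4) S'(2) by (intro card_Diff_Un_disjoint)
  ultimately show ?thesis by linarith
qed

lemma canonical_exchange_no_new_cycle:
  assumes "simple_graph V E" "canonical V E S" "R \<subseteq> S" "finite T"
    and "\<forall>q\<in>T. is_path E q" "pairwise (\<lambda>p q. set p \<inter> set q = {}) T"
    and "(\<Union>q\<in>T. set q) = (\<Union>p\<in>R. set p)"
    and "card T = card R" "\<forall>p\<in>R. \<not> cycle_comp E p" "q \<in> T"
  shows "\<not> cycle_comp E q"
proof
  assume q_cycle: "cycle_comp E q"
  have S: "path_partition V E S"
    using assms(2) unfolding canonical_def by blast
  note S' = path_partition_exchange[OF S assms(3,5-7)]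
  define S' where "S' = S - R \<union> T"
  have "card S' + card R = card S + card T"
    unfolding S'_def using finite_path_partition[OF assms(1) S] assms(3,4) S'(2)
    by (intro card_Diff_Un_disjoint)
  then have "num_cycles E S' \<le> num_cycles E S"
    using assms(2,8) S'(1) unfolding canonical_def S'_def by simp
  moreover have "card (insert q {p\<in>S. cycle_comp E p}) \<le> num_cycles E S'"
    unfolding num_cycles_def
  proof (rule card_mono)
    have "finite S'"
      using finite_path_partition[OF assms(1) S'(1)] unfolding S'_def .
    then show "finite {p\<in>S'. cycle_comp E p}" by simp
    show "insert q {p\<in>S. cycle_comp E p} \<subseteq> {p\<in>S'. cycle_comp E p}"
      using assms(9,10) q_cycle unfolding S'_def by auto
  qed
  moreover have "card (insert q {p\<in>S. cycle_comp E p}) = Suc (num_cycles E S)"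
    using finite_path_partition[OF assms(1) S] q_cycle assms(9,10) S'(2)
    unfolding num_cycles_def by (subst card_insert_disjoint) auto
  ultimately show False by linarith
qed

lemma V1_path_from:
  assumes "simple_graph V E" "path_partition V E S" "y \<in> V1 E S"
  obtains C q where "C \<in> S" "is_path E q" "set q = set C" "hd q = y"
    "cycle_comp E C \<or> y = hd C \<or> y = last C"
proof -
  have "(\<exists>C\<in>S. y = hd C \<or> y = last C) \<or> (\<exists>C\<in>S. cycle_comp E C \<and> y \<in> set C)"
    using assms(3) unfolding V1_def by blast
  then consider (endpoint) C where "C \<in> S" "y = hd C \<or> y = last C"
    | (cycle) C where "C \<in> S" "cycle_comp E C" "y \<in> set C"
    by blast
  then show ?thesis
  proof cases
    case endpoint
    have C_path: "is_path E C"
      using assms(2) endpoint(1) by (rule path_partition_is_path)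
    show ?thesis
    proof (cases "y = hd C")
      case True
      from endpoint(1) C_path refl True[symmetric] disjI2[OF endpoint(2)] show ?thesis
        by (rule that)
    next
      case False
      with endpoint(2) C_path have "hd (rev C) = y"
        unfolding is_path_def by (simp add: hd_rev)
      from endpoint(1) is_path_rev[OF assms(1) C_path] set_rev this disjI2[OF endpoint(2)] show ?thesis
        by (rule that)
    qed
  next
    case cycle
    obtain q where "is_path E q" "set q = set C" "hd q = y"
      using cycle_comp_rotate_path[OF cycle(2,3)] by blast
    with cycle(1) show ?thesis
      using cycle(2) by (intro that[of C q]) simp_all
  qed
qed

lemma canonical_no_path_on_two_components:
  assumes "simple_graph V E" "canonical V E S" "p \<in> S" "q \<in> S" "p \<noteq> q"
    and "is_path E r" "set r = set p \<union> set q"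
  shows False
proof -
  have "card {p, q} \<le> card {r}"
    by (rule canonical_exchange_card[OF assms(1,2)]) (simp_all add: assms(3,4,6,7))
  then show False
    using assms(5) by simp
qed

lemma canonical_no_two_paths_on_three_components:
  assumes "simple_graph V E" "canonical V E S" "{p, q, c} \<subseteq> S" "distinct [p, q, c]"
    and "is_path E r1" "is_path E r2" "set r1 \<inter> set r2 = {}"
    and "set r1 \<union> set r2 = set p \<union> set q \<union> set c"
  shows False
proof -
  have "card {p, q, c} \<le> card {r1, r2}"
  proof (rule canonical_exchange_card[OF assms(1-3)])
    show "pairwise (\<lambda>p q. set p \<inter> set q = {}) {r1, r2}"
      using assms(7) by (auto simp: pairwise_def)
  qed (simp_all add: assms(5,6,8) Un_assoc)
  also have "\<dots> \<le> 2"
    by (rule card_insert_le_m1) simp_all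
  finally show False
    using assms(4) by simp
qed

lemma canonical_no_cycle_on_two_components:
  assumes "simple_graph V E" "canonical V E S" "p \<in> S" "q \<in> S" "p \<noteq> q"
    and "\<not> cycle_comp E p" "\<not> cycle_comp E q"
    and "is_path E r1" "is_path E r2" "set r1 \<inter> set r2 = {}"
    and "set r1 \<union> set r2 = set p \<union> set q"
  shows "\<not> cycle_comp E r2"
proof -
  have "r1 \<noteq> r2"
    using assms(8,10) unfolding is_path_def by auto
  show ?thesis
  proof (rule canonical_exchange_no_new_cycle[OF assms(1,2), of "{p, q}" "{r1, r2}"])
    show "pairwise (\<lambda>p q. set p \<inter> set q = {}) {r1, r2}"
      using assms(10) by (auto simp: pairwise_def)
    show "card {r1, r2} = card {p, q}"
      using \<open>r1 \<noteq> r2\<close> assms(5) by simp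
  qed (simp_all add: assms(3,4,6-9,11))
qed

locale rerouting =
  fixes V :: "'a set" and E :: "'a \<Rightarrow> 'a \<Rightarrow> bool" and S :: "'a list set"
    and P P' A B Q :: "'a list" and x1 x2 :: 'a
  assumes simple: "simple_graph V E" and canonical: "canonical V E S"
    and P_in: "P \<in> S" and P'_in: "P' \<in> S" and P'_ne_P: "P' \<noteq> P"
    and P_path_comp: "path_comp E P" and P'_path_comp: "path_comp E P'"
    and P_split: "A @ [x1, x2] @ B \<in> {P, rev P}"
    and Q_orient: "Q \<in> {P', rev P'}"
    and x1_Q: "E x1 (hd Q)"
begin

lemma partition: "path_partition V E S"
  using canonical unfolding canonical_def by simp

lemma E_sym: "E u v \<Longrightarrow> E v u"
  using simple unfolding simple_graph_def by simp

lemma E_irrefl: "\<not> E u u"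
  using simple unfolding simple_graph_def by auto

lemma oriented_component:
  assumes "C \<in> S" "p \<in> {C, rev C}"
  shows "is_path E p" "set p = set C"
  using assms is_path_rev[OF simple path_partition_is_path[OF partition assms(1)]]
    path_partition_is_path[OF partition assms(1)] by auto

lemma path_P: "is_path E (A @ [x1, x2] @ B)" and set_P: "set (A @ [x1, x2] @ B) = set P"
  using oriented_component[OF P_in P_split] by simp_all

lemma path_Q: "is_path E Q" and set_Q: "set Q = set P'"
  using oriented_component[OF P'_in Q_orient] by simp_all

lemma P_P'_disjoint: "set P \<inter> set P' = {}"
  using path_partition_disjoint[OF partition P_in P'_in] P'_ne_P by blast

lemma path_A_x1_Q: "is_path E (A @ x1 # Q)"
proof -
  have "is_path E ((A @ [x1]) @ x2 # B)"
    using path_P by simp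
  then have "is_path E (A @ [x1])"
    by (rule is_path_appendD(1)) simp
  moreover note path_Q
  moreover have "E (last (A @ [x1])) (hd Q)"
    using x1_Q by simp
  moreover have "set (A @ [x1]) \<inter> set Q = {}"
    using set_P set_Q P_P'_disjoint by auto
  ultimately have "is_path E ((A @ [x1]) @ Q)"
    by (rule is_path_append)
  then show ?thesis by simp
qed

lemma path_x2_B: "is_path E (x2 # B)"
proof -
  have "is_path E ((A @ [x1]) @ x2 # B)"
    using path_P by simp
  then show ?thesis
    by (rule is_path_appendD(2)) simp
qed

lemma reroute_disjoint: "set (A @ x1 # Q) \<inter> set (x2 # B) = {}"
  using path_P set_P set_Q P_P'_disjoint unfolding is_path_def by auto

lemma reroute_covers: "set (A @ x1 # Q) \<union> set (x2 # B) = set P \<union> set P'"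
  using set_P set_Q by auto

lemma path_nbrs_split:
  assumes "consecutive_on (A @ [x1, x2] @ B) u v"
  shows "path_nbrs E S u v"
proof -
  have "consecutive_on P u v"
    using P_split assms consecutive_on_rev[of P] by auto
  then show ?thesis
    using P_in P_path_comp unfolding path_nbrs_def by blast
qed

lemma no_edge_x2_last_Q: "\<not> E x2 (last Q)"
proof
  assume "E x2 (last Q)"
  moreover have "Q \<noteq> []"
    using path_Q unfolding is_path_def by simp
  ultimately have "E (last (A @ x1 # Q)) (hd (x2 # B))"
    by (simp add: E_sym)
  with path_A_x1_Q path_x2_B have "is_path E ((A @ x1 # Q) @ x2 # B)"
    using reroute_disjoint by (rule is_path_append)
  then show False
    by (rule canonical_no_path_on_two_components[OF simple canonical P_in P'_in P'_ne_P[symmetric]])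
       (metis reroute_covers set_append set_rev)
qed

lemma no_edge_x2_hd_A:
  assumes "A \<noteq> []"
  shows "\<not> E x2 (hd A)"
proof
  assume "E x2 (hd A)"
  with assms have "E (last (rev (A @ x1 # Q))) (hd (x2 # B))"
    by (simp add: E_sym last_rev)
  moreover have "set (rev (A @ x1 # Q)) \<inter> set (x2 # B) = {}"
    using reroute_disjoint by (simp only: set_rev)
  ultimately have "is_path E (rev (A @ x1 # Q) @ x2 # B)"
    using is_path_rev[OF simple path_A_x1_Q] path_x2_B by (intro is_path_append)
  then show False
    by (rule canonical_no_path_on_two_components[OF simple canonical P_in P'_in P'_ne_P[symmetric]])
       (metis reroute_covers set_append set_rev)
qed

lemma no_edge_x2_last_B:
  assumes "2 \<le> length B"
  shows "\<not> E x2 (last B)"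
proof
  assume "E x2 (last B)"
  then have "cycle_comp E (x2 # B)"
    using assms path_x2_B E_sym unfolding cycle_comp_def is_path_def
    by (intro conjI exI[of _ "x2 # B"]) auto
  moreover have "\<not> cycle_comp E (x2 # B)"
    by (rule canonical_no_cycle_on_two_components[OF simple canonical P_in P'_in P'_ne_P[symmetric]
          _ _ path_A_x1_Q path_x2_B reroute_disjoint reroute_covers])
       (use P_path_comp P'_path_comp in \<open>simp_all add: path_comp_def\<close>)
  ultimately show False by contradiction
qed

lemma no_edge_x2_other_component:
  assumes "C \<in> S" "C \<noteq> P" "C \<noteq> P'" "is_path E q" "set q = set C"
  shows "\<not> E x2 (hd q)"
proof
  assume "E x2 (hd q)"
  moreover have "q \<noteq> []"
    using assms(4) unfolding is_path_def by simp
  ultimately have "E (last (rev q)) (hd (x2 # B))"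
    by (simp add: E_sym last_rev)
  moreover have C_disjoint: "set C \<inter> set P = {}" "set C \<inter> set P' = {}"
    using path_partition_disjoint[OF partition assms(1)] P_in P'_in assms(2,3) by simp_all
  then have "set (rev q) \<inter> set (x2 # B) = {}"
    using assms(5) set_P by auto
  ultimately have path_q_x2_B: "is_path E (rev q @ x2 # B)"
    using is_path_rev[OF simple assms(4)] path_x2_B by (intro is_path_append)
  have "set (A @ x1 # Q) \<inter> set (rev q @ x2 # B) = {}"
    using reroute_disjoint set_P set_Q assms(5) C_disjoint by auto
  moreover have "set (A @ x1 # Q) \<union> set (rev q @ x2 # B) = set P \<union> set P' \<union> set C"
    using reroute_covers assms(5) by auto
  moreover have "{P, P', C} \<subseteq> S" "distinct [P, P', C]"
    using P_in P'_in assms(1-3) P'_ne_P by auto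
  ultimately show False
    using canonical_no_two_paths_on_three_components[OF simple canonical _ _ path_A_x1_Q path_q_x2_B]
    by blast
qed

lemma x2_neighbour_not_end_of_P:
  assumes "y = hd P \<or> y = last P" "E x2 y" "\<not> path_nbrs E S x2 y"
  shows False
proof -
  let ?P0 = "A @ [x1, x2] @ B"
  from P_split consider "?P0 = P" | "?P0 = rev P"
    by blast
  then have "{hd ?P0, last ?P0} = {hd P, last P}"
  proof cases
    case 2
    then have "P \<noteq> []"
      by auto
    with 2 show ?thesis
      by (simp add: hd_rev last_rev insert_commute)
  qed simp
  with assms(1) have "y = hd ?P0 \<or> y = last ?P0"
    by blast
  then show False
  proof
    assume y_hd: "y = hd ?P0"
    show False
    proof (cases "A = []")
      case True
      then have "consecutive_on ?P0 x2 y"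
        using y_hd consecutive_on_append[of A x1 x2 B] consecutive_on_commute[of ?P0] by simp
      then show False
        using assms(3) path_nbrs_split by blast
    next
      case False
      then show False
        using no_edge_x2_hd_A assms(2) y_hd by simp
    qed
  next
    assume y_last: "y = last ?P0"
    consider "B = []" | b where "B = [b]" | "2 \<le> length B"
      by (cases B rule: remdups_adj.cases) auto
    then show False
    proof cases
      case 1
      then show False
        using y_last assms(2) E_irrefl by simp
    next
      case (2 b)
      then have "consecutive_on ?P0 x2 y"
        using y_last consecutive_on_append[of "A @ [x1]" x2 b "[]"] by simp
      then show False
        using assms(3) path_nbrs_split by blast
    next
      case 3
      then have "B \<noteq> []"
        by auto
      with 3 show False
        using no_edge_x2_last_B assms(2) y_last by simp
    qed
  qed
qed

lemma end_of_P'_is_end_of_Q: "y = hd P' \<or> y = last P' \<Longrightarrow> y = hd Q \<or> y = last Q"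
  using Q_orient path_Q unfolding is_path_def by (auto simp: hd_rev last_rev)

lemma x2_V1_neighbour_is_hd_Q:
  assumes "y \<in> V1 E S" "E x2 y" "\<not> path_nbrs E S x2 y"
  shows "y = hd Q"
proof -
  obtain C q where C: "C \<in> S" "is_path E q" "set q = set C" "hd q = y"
    and ends: "cycle_comp E C \<or> y = hd C \<or> y = last C"
    by (rule V1_path_from[OF simple partition assms(1)])
  consider "C = P" | "C = P'" | "C \<noteq> P" "C \<noteq> P'"
    by blast
  then show ?thesis
  proof cases
    case 1
    then have "y = hd P \<or> y = last P"
      using ends P_path_comp unfolding path_comp_def by simp
    then show ?thesis
      using x2_neighbour_not_end_of_P assms(2,3) by blast
  next
    case 2
    then have "y = hd Q \<or> y = last Q"
      using ends P'_path_comp end_of_P'_is_end_of_Q unfolding path_comp_def by simp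
    then show ?thesis
      using no_edge_x2_last_Q assms(2) by blast
  next
    case 3
    then show ?thesis
      using no_edge_x2_other_component[OF C(1) 3 C(2,3)] C(4) assms(2) by simp
  qed
qed

end

theorem mainTheorem9:
  fixes V :: "'a set" and E :: "'a \<Rightarrow> 'a \<Rightarrow> bool" and S :: "'a list set"
    and P P' :: "'a list" and x1 x2 z :: 'a
  assumes "simple_graph V E"
    and "regular V E 6"
    and "canonical V E S"
    and "P \<in> S" and "path_comp E P"
    and "x1 \<in> V2 V E S" and "x2 \<in> V2 V E S"
    and "consecutive_on P x1 x2"
    and "goes_to V E S x1 z"
    and "P' \<in> S" and "path_comp E P'" and "P' \<noteq> P"
    and "z = hd P' \<or> z = last P'"
  shows "{y. goes_to V E S x2 y} = {z}"
proof -
  obtain A B where split: "A @ [x1, x2] @ B \<in> {P, rev P}"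
    using assms(8) by (rule consecutive_on_split_oriented)
  have "is_path E P'"
    using assms(3,10) path_partition_is_path unfolding canonical_def by blast
  then have "\<exists>Q\<in>{P', rev P'}. hd Q = z"
    using assms(13) unfolding is_path_def by (auto simp: hd_rev)
  then obtain Q where Q: "Q \<in> {P', rev P'}" "hd Q = z"
    by blast
  have "E x1 z"
    using assms(9) unfolding goes_to_def balanced_edge_def free_edge_def by simp
  then interpret rerouting V E S P P' A B Q x1 x2
    using assms(1,3-5,10-12) split Q by unfold_locales simp_all
  have goes_only_to_z: "y = z" if "goes_to V E S x2 y" for y
    using that x2_V1_neighbour_is_hd_Q[of y] Q(2)
    unfolding goes_to_def balanced_edge_def free_edge_def by simp
  obtain y where "y \<in> V1 E S" "free_edge E S x2 y"
    using assms(7) unfolding V2_def by blast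
  then have "goes_to V E S x2 y"
    using assms(7) unfolding goes_to_def balanced_edge_def by blast
  with goes_only_to_z show ?thesis
    by blast
qed

end
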